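(* Let $k\ge1$, $m\ge1$, $h\ge0$ be fixed integers. For the random key graph $G(n,X_n,Y_n)$ with $X_n\ge2$ for all large $n$ and edge probability $q_n=\frac{\ln n+(k-1)\ln\ln n+\alpha_n}{n}$ with $\alpha_n=o(\ln n)$, let $N_i$ ($1\le i\le m$) be the set of nodes in $\{v_{m+1},\dots,v_n\}$ adjacent to $v_i$. Then $$\mathbb{P}\Big[\Big|\bigcup_{i=1}^m N_i\Big|\le hm-1\Big]=o\big((nq_n)^{hm}e^{-mnq_n}\big)\quad(n\to\infty).$$
   Context: The random key graph $G(n,X_n,Y_n)$ (with $1\le X_n\le Y_n$ integers depending on $n$) has node set $\{v_1,\dots,v_n\}$; each node $v_i$ is independently assigned a set $S_i$ of $X_n$ distinct objects chosen uniformly at random among all $X_n$-element subsets of a pool of $Y_n$ objects; an undirected edge joins $v_i$ and $v_j$ ($i\ne j$) iff $S_i\cap S_j\neq\emptyset$. The edge probability is $q_n=1-\binom{Y_n-X_n}{X_n}/\binom{Y_n}{X_n}$. *)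

theory Defs
  imports "HOL-Probability.Probability" "HOL-Library.Landau_Symbols"
begin

text \<open>Nodes v_1..v_n are represented by indices 0..n-1
  (v_i corresponds to index i-1).\<close>

definition key_rings :: "nat \<Rightarrow> nat \<Rightarrow> nat set set" where
  "key_rings X Y = {S. S \<subseteq> {..<Y} \<and> card S = X}"

definition rkg :: "nat \<Rightarrow> nat \<Rightarrow> nat \<Rightarrow> (nat \<Rightarrow> nat set) pmf" where
  "rkg n X Y = Pi_pmf {..<n} {} (\<lambda>_. pmf_of_set (key_rings X Y))"

definition rkg_adj :: "(nat \<Rightarrow> nat set) \<Rightarrow> nat \<Rightarrow> nat \<Rightarrow> bool" where
  "rkg_adj S i j \<longleftrightarrow> i \<noteq> j \<and> S i \<inter> S j \<noteq> {}"

definition rkg_edge_prob :: "nat \<Rightarrow> nat \<Rightarrow> real" where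
  "rkg_edge_prob X Y = 1 - real ((Y - X) choose X) / real (Y choose X)"

text \<open>N_i (1 \<le> i \<le> m): nodes among v_{m+1},...,v_n adjacent to v_i; with 0-based
  indices, node i-1 and nodes j with m \<le> j < n.\<close>
definition nbr_set :: "nat \<Rightarrow> nat \<Rightarrow> (nat \<Rightarrow> nat set) \<Rightarrow> nat \<Rightarrow> nat set" where
  "nbr_set n m S i = {j. m \<le> j \<and> j < n \<and> rkg_adj S (i - 1) j}"

end

theory Submission
  imports Defs "HOL-Real_Asymp.Real_Asymp"
begin

text \<open>Condition on the key rings of \<open>v\<^sub>1, \<dots>, v\<^sub>m\<close> and let \<open>T\<close> be their union. Each of
  the other \<open>n - m\<close> nodes then lies in \<open>\<Union>i. N\<^sub>i\<close> independently, namely iff its ring meets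
  \<open>T\<close>, which happens with probability \<open>p\<^sub>T\<close>. So \<open>card (\<Union>i. N\<^sub>i)\<close> is binomial, and its
  lower tail up to \<open>r = h m - 1\<close> is at most \<open>(r + 1) * max 1 (n p\<^sub>T) ^ r * (1 - p\<^sub>T) ^ (n - m - r)\<close>.
  Comparing binomial coefficients gives \<open>1 - p\<^sub>T \<le> exp (- card T * H)\<close> with
  \<open>H = (\<Sum>i<X. 1 / (Y - i)) \<ge> q / X\<close>, so everything reduces to the expectation of \<open>\<rho> ^ card T\<close>
  for \<open>\<rho> = exp (- (n - m - r) H)\<close>. Were the rings disjoint this would be
  \<open>\<rho> ^ (m X) \<approx> exp (- m n q)\<close>; overlaps cost at most a factor \<open>e\<close> as long as \<open>n q \<le> 3/2 ln n\<close>
  (this is where \<open>X \<ge> 2\<close> enters). Hence the probability is \<open>O ((n q) ^ (h m - 1) exp (- m n q))\<close>,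
  which is \<open>o ((n q) ^ (h m) exp (- m n q))\<close> because \<open>n q \<ge> 3/4 ln n \<rightarrow> \<infinity>\<close>.\<close>

section \<open>Uniformly random key rings\<close>

abbreviation key_ring_pmf :: "nat \<Rightarrow> nat \<Rightarrow> nat set pmf" where
  "key_ring_pmf X Y \<equiv> pmf_of_set (key_rings X Y)"

lemma finite_key_rings: "finite (key_rings X Y)"
  unfolding key_rings_def by (rule finite_subset[of _ "Pow {..<Y}"]) auto

lemma card_key_rings: "card (key_rings X Y) = Y choose X"
  unfolding key_rings_def using n_subsets[of "{..<Y}" X] by simp

lemma key_rings_nonempty: "X \<le> Y \<Longrightarrow> key_rings X Y \<noteq> {}"
proof -
  assume "X \<le> Y"
  then have "{..<X} \<in> key_rings X Y" by (auto simp: key_rings_def)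
  then show ?thesis by auto
qed

lemma key_ringsD:
  assumes "S \<in> key_rings X Y"
  shows "S \<subseteq> {..<Y}" "card S = X" "finite S"
  using assms unfolding key_rings_def by (auto intro: finite_subset)

lemma set_pmf_key_ring_pmf: "X \<le> Y \<Longrightarrow> set_pmf (key_ring_pmf X Y) = key_rings X Y"
  by (simp add: finite_key_rings key_rings_nonempty)

lemma card_key_rings_disjoint:
  assumes "T \<subseteq> {..<Y}"
  shows "card {S\<in>key_rings X Y. S \<inter> T = {}} = (Y - card T) choose X"
proof -
  have "{S\<in>key_rings X Y. S \<inter> T = {}} = {S. S \<subseteq> {..<Y} - T \<and> card S = X}"
    unfolding key_rings_def by auto
  moreover have "card ({..<Y} - T) = Y - card T"
    using assms by (simp add: card_Diff_subset finite_subset)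
  ultimately show ?thesis using n_subsets[of "{..<Y} - T" X] by simp
qed

lemma card_key_rings_superset:
  assumes "A \<subseteq> {..<Y}" "card A \<le> X"
  shows "card {S\<in>key_rings X Y. A \<subseteq> S} = (Y - card A) choose (X - card A)"
proof -
  have fin_A: "finite A" using assms(1) finite_subset by blast
  let ?R = "{R. R \<subseteq> {..<Y} - A \<and> card R = X - card A}"
  have "bij_betw (\<lambda>S. S - A) {S\<in>key_rings X Y. A \<subseteq> S} ?R"
  proof (rule bij_betw_byWitness[where f' = "\<lambda>R. R \<union> A"])
    show "(\<lambda>S. S - A) ` {S\<in>key_rings X Y. A \<subseteq> S} \<subseteq> ?R"
      using fin_A by (auto simp: key_rings_def card_Diff_subset)
    show "(\<lambda>R. R \<union> A) ` ?R \<subseteq> {S\<in>key_rings X Y. A \<subseteq> S}"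
    proof safe
      fix R assume R: "R \<subseteq> {..<Y} - A" "card R = X - card A"
      then have "card (R \<union> A) = X"
        using fin_A assms(2) finite_subset[OF R(1)] by (subst card_Un_disjoint) auto
      then show "R \<union> A \<in> key_rings X Y" using R assms(1) by (auto simp: key_rings_def)
    qed
  qed auto
  then have "card {S\<in>key_rings X Y. A \<subseteq> S} = card ({..<Y} - A) choose (X - card A)"
    by (simp add: bij_betw_same_card n_subsets)
  then show ?thesis using assms fin_A by (simp add: card_Diff_subset)
qed

lemma binomial_diff_le:
  assumes "a \<le> X" "X \<le> Y" "0 < Y"
  shows "real ((Y - a) choose (X - a)) \<le> real (Y choose X) * (real X / real Y) ^ a"
  using assms(1)
proof (induction a)
  case 0
  then show ?case by simp
next
  case (Suc a)
  define X' where "X' = X - a"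
  define Y' where "Y' = Y - a"
  have X'_pos: "0 < X'" and Y'_pos: "0 < Y'" using Suc.prems assms by (auto simp: X'_def Y'_def)
  have "real X' * real (Y' choose X') = real Y' * real ((Y' - 1) choose (X' - 1))"
    using times_binomial_minus1_eq[OF X'_pos, of Y'] by (metis of_nat_mult)
  then have step: "real ((Y' - 1) choose (X' - 1)) = real (Y' choose X') * (real X' / real Y')"
    using Y'_pos by (simp add: field_simps)
  have ratio: "real X' / real Y' \<le> real X / real Y"
    using Suc.prems assms mult_left_mono[of X Y a]
    by (simp add: X'_def Y'_def divide_simps of_nat_diff algebra_simps flip: of_nat_mult)
  have "real ((Y - Suc a) choose (X - Suc a)) = real (Y' choose X') * (real X' / real Y')"
    using step by (simp add: X'_def Y'_def)
  also have "\<dots> \<le> real (Y choose X) * (real X / real Y) ^ a * (real X / real Y)"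
    using Suc ratio by (intro mult_mono) (auto simp: X'_def Y'_def)
  finally show ?case by (simp add: mult_ac)
qed

lemma card_key_rings_superset_le:
  assumes "X \<le> Y" "0 < Y"
  shows "real (card {S\<in>key_rings X Y. A \<subseteq> S})
           \<le> real (card (key_rings X Y)) * (real X / real Y) ^ card A"
proof (cases "A \<subseteq> {..<Y} \<and> card A \<le> X")
  case True
  then show ?thesis
    using card_key_rings_superset binomial_diff_le assms by (simp add: card_key_rings)
next
  case False
  then have "{S\<in>key_rings X Y. A \<subseteq> S} = {}"
    by (auto dest: key_ringsD intro: card_mono)
  then show ?thesis by (simp only: card.empty of_nat_0) simp
qed

lemma prob_key_ring_meets:
  assumes "T \<subseteq> {..<Y}" "X \<le> Y"
  shows "measure_pmf.prob (key_ring_pmf X Y) {s. s \<inter> T \<noteq> {}}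
           = 1 - real ((Y - card T) choose X) / real (Y choose X)"
proof -
  let ?K = "key_rings X Y"
  have "measure_pmf.prob (key_ring_pmf X Y) {s. s \<inter> T \<noteq> {}}
      = 1 - measure_pmf.prob (key_ring_pmf X Y) {s. s \<inter> T = {}}"
    using measure_pmf.prob_compl[of "{s. s \<inter> T = {}}" "key_ring_pmf X Y"]
    by (simp add: Compl_eq_Diff_UNIV[symmetric] Collect_neg_eq[symmetric])
  also have "measure_pmf.prob (key_ring_pmf X Y) {s. s \<inter> T = {}}
      = real (card {S\<in>?K. S \<inter> T = {}}) / real (card ?K)"
    using assms by (simp add: measure_pmf_of_set finite_key_rings key_rings_nonempty Int_def conj_commute)
  finally show ?thesis using assms by (simp add: card_key_rings_disjoint card_key_rings)
qed

lemma rkg_edge_prob_eq_prob: "X \<le> Y \<Longrightarrow>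
  rkg_edge_prob X Y = measure_pmf.prob (key_ring_pmf X Y) {s. s \<inter> {..<X} \<noteq> {}}"
  by (simp add: prob_key_ring_meets rkg_edge_prob_def)

lemma prob_key_ring_meets_le:
  assumes "T \<subseteq> {..<Y}" "X \<le> Y" "0 < Y"
  shows "measure_pmf.prob (key_ring_pmf X Y) {s. s \<inter> T \<noteq> {}} \<le> real (card T) * (real X / real Y)"
proof -
  let ?K = "key_rings X Y"
  have card_K: "0 < real (card ?K)"
    using assms finite_key_rings key_rings_nonempty by (simp add: card_gt_0_iff)
  have "{s\<in>?K. s \<inter> T \<noteq> {}} = (\<Union>x\<in>T. {s\<in>?K. {x} \<subseteq> s})" by auto
  then have "real (card {s\<in>?K. s \<inter> T \<noteq> {}}) \<le> (\<Sum>x\<in>T. real (card {s\<in>?K. {x} \<subseteq> s}))"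
    using card_UN_le[of T "\<lambda>x. {s\<in>?K. {x} \<subseteq> s}"] finite_subset[OF assms(1)]
    by (simp flip: of_nat_sum)
  also have "\<dots> \<le> real (card T) * (real (card ?K) * (real X / real Y))"
    using card_key_rings_superset_le[OF assms(2,3), of "{_}"]
      sum_mono[of T _ "\<lambda>_. real (card ?K) * (real X / real Y)"]
    by simp
  finally show ?thesis
    using assms card_K by (simp add: measure_pmf_of_set finite_key_rings key_rings_nonempty
        Int_def conj_commute divide_simps mult_ac)
qed

definition key_harmonic :: "nat \<Rightarrow> nat \<Rightarrow> real" where
  "key_harmonic X Y = (\<Sum>i<X. 1 / (real Y - real i))"

lemma key_harmonic_ge: "X \<le> Y \<Longrightarrow> real X / real Y \<le> key_harmonic X Y"
  using sum_mono[of "{..<X}" "\<lambda>_. 1 / real Y" "\<lambda>i. 1 / (real Y - real i)"]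
  by (force simp: key_harmonic_def intro: frac_le)

lemma key_harmonic_nonneg: "X \<le> Y \<Longrightarrow> 0 \<le> key_harmonic X Y"
  using key_harmonic_ge[of X Y] by (smt (verit) divide_nonneg_nonneg of_nat_0_le_iff)

lemma key_harmonic_le: "X < Y \<Longrightarrow> key_harmonic X Y \<le> real X / (real Y - real X)"
  using sum_mono[of "{..<X}" "\<lambda>i. 1 / (real Y - real i)" "\<lambda>_. 1 / (real Y - real X)"]
  by (force simp: key_harmonic_def intro: frac_le)

lemma binomial_diff_le_exp:
  assumes "t \<le> Y" "X \<le> Y"
  shows "real ((Y - t) choose X) \<le> real (Y choose X) * exp (- real t * key_harmonic X Y)"
proof (cases "X \<le> Y - t")
  case False
  then show ?thesis by (simp add: binomial_eq_0)
next
  case True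
  have factor: "(real Y - real t - real i) / (real Y - real i) \<le> exp (- real t * (1 / (real Y - real i)))"
    if "i < X" for i
  proof -
    have "(real Y - real t - real i) / (real Y - real i) = 1 + (- real t * (1 / (real Y - real i)))"
      using that assms by (simp add: field_simps)
    then show ?thesis using exp_ge_add_one_self by presburger
  qed
  have "real ((Y - t) choose X)
      = (\<Prod>i<X. (real Y - real i) / (real X - real i) * ((real Y - real t - real i) / (real Y - real i)))"
    using True assms
    by (auto simp: binomial_altdef_of_nat atLeast0LessThan of_nat_diff intro!: prod.cong)
  also have "\<dots> = real (Y choose X) * (\<Prod>i<X. (real Y - real t - real i) / (real Y - real i))"
    unfolding prod.distrib using assms by (simp add: binomial_altdef_of_nat atLeast0LessThan of_nat_diff)
  also have "\<dots> \<le> real (Y choose X) * (\<Prod>i<X. exp (- real t * (1 / (real Y - real i))))"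
    using True factor by (intro mult_left_mono prod_mono) auto
  also have "\<dots> = real (Y choose X) * exp (- real t * key_harmonic X Y)"
    by (simp add: key_harmonic_def exp_sum sum_distrib_left)
  finally show ?thesis .
qed

lemma prob_key_ring_avoids_le_exp:
  assumes "T \<subseteq> {..<Y}" "X \<le> Y"
  shows "1 - measure_pmf.prob (key_ring_pmf X Y) {s. s \<inter> T \<noteq> {}} \<le> exp (- real (card T) * key_harmonic X Y)"
proof -
  have "card T \<le> Y" using card_mono[OF _ assms(1)] by simp
  then show ?thesis
    using binomial_diff_le_exp[of "card T" Y X] assms
    by (simp add: prob_key_ring_meets divide_simps mult_ac)
qed

section \<open>Overlap of several key rings\<close>

lemma sum_Pow_power:
  fixes c :: "'a::comm_semiring_1"
  assumes "finite B"
  shows "(\<Sum>A\<in>Pow B. c ^ card A) = (1 + c) ^ card B"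
  using prod_add[OF assms, of "\<lambda>_. c" "\<lambda>_. 1"] by (simp add: add.commute)

lemma nn_integral_pmf_of_set_real:
  assumes "finite S" "S \<noteq> {}" "\<And>x. x \<in> S \<Longrightarrow> 0 \<le> g x"
  shows "(\<integral>\<^sup>+x. ennreal (g x) \<partial>pmf_of_set S) = ennreal ((\<Sum>x\<in>S. g x) / real (card S))"
proof -
  have "(\<integral>\<^sup>+x. ennreal (g x) \<partial>pmf_of_set S) = ennreal (\<Sum>x\<in>S. g x) / ennreal (real (card S))"
    using assms by (simp add: nn_integral_pmf_of_set sum_ennreal ennreal_of_nat_eq_real_of_nat)
  also have "\<dots> = ennreal ((\<Sum>x\<in>S. g x) / real (card S))"
    using assms by (intro divide_ennreal) (auto intro: sum_nonneg simp: card_gt_0_iff)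
  finally show ?thesis .
qed

text \<open>Writing \<open>\<rho>\<^sup>-\<^sup>k = (1 + (1/\<rho> - 1))\<^sup>k\<close> for \<open>k = card (B \<inter> y)\<close>, expanding over the
  subsets of \<open>B \<inter> y\<close> and swapping the sums reduces the average to the number of key rings
  containing a given set.\<close>
lemma sum_key_rings_power_card_Un_le:
  fixes \<rho> :: real
  assumes "finite B" "0 < \<rho>" "\<rho> \<le> 1" "X \<le> Y" "0 < Y"
  shows "(\<Sum>y\<in>key_rings X Y. \<rho> ^ card (B \<union> y))
     \<le> real (card (key_rings X Y)) * \<rho> ^ (card B + X) * (1 + (1/\<rho> - 1) * (real X / real Y)) ^ card B"
proof -
  define K where "K = key_rings X Y"
  define w where "w = 1/\<rho> - 1"
  have w_nonneg: "0 \<le> w" using assms by (simp add: w_def field_simps)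
  have expand: "\<rho> ^ card (B \<union> y) = \<rho> ^ (card B + X) * (\<Sum>A\<in>{A\<in>Pow B. A \<subseteq> y}. w ^ card A)"
    if "y \<in> K" for y
  proof -
    have y: "finite y" "card y = X" using key_ringsD that by (auto simp: K_def)
    have "{A\<in>Pow B. A \<subseteq> y} = Pow (B \<inter> y)" by auto
    then have "(\<Sum>A\<in>{A\<in>Pow B. A \<subseteq> y}. w ^ card A) = (1 / \<rho>) ^ card (B \<inter> y)"
      using sum_Pow_power[of "B \<inter> y" w] assms(1) by (simp add: w_def)
    moreover have "card B + X = card (B \<union> y) + card (B \<inter> y)"
      using card_Un_Int[OF assms(1) y(1)] y(2) by simp
    ultimately show ?thesis
      using assms(2) by (simp add: power_add power_one_over field_simps)
  qed
  have "(\<Sum>y\<in>K. \<rho> ^ card (B \<union> y)) = \<rho> ^ (card B + X) * (\<Sum>y\<in>K. \<Sum>A\<in>{A\<in>Pow B. A \<subseteq> y}. w ^ card A)"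
    by (simp add: expand sum_distrib_left)
  also have "(\<Sum>y\<in>K. \<Sum>A\<in>{A\<in>Pow B. A \<subseteq> y}. w ^ card A) = (\<Sum>A\<in>Pow B. \<Sum>y | y \<in> K \<and> A \<subseteq> y. w ^ card A)"
    using assms(1) by (intro sum.swap_restrict) (simp_all add: K_def finite_key_rings)
  also have "\<dots> = (\<Sum>A\<in>Pow B. real (card {y\<in>K. A \<subseteq> y}) * w ^ card A)"
    by simp
  also have "\<dots> \<le> (\<Sum>A\<in>Pow B. real (card K) * (real X / real Y) ^ card A * w ^ card A)"
    using card_key_rings_superset_le[OF assms(4,5)] w_nonneg
    by (intro sum_mono mult_right_mono) (auto simp: K_def)
  also have "\<dots> = real (card K) * (\<Sum>A\<in>Pow B. (w * (real X / real Y)) ^ card A)"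
    by (simp add: sum_distrib_left power_mult_distrib power_divide mult_ac)
  also have "\<dots> = real (card K) * (1 + w * (real X / real Y)) ^ card B"
    by (simp only: sum_Pow_power assms(1))
  finally show ?thesis
    using assms(2) by (simp add: K_def w_def mult_ac mult_left_mono)
qed

lemma nn_integral_key_ring_power_card_Un_le:
  fixes \<rho> :: real
  assumes "finite B" "0 < \<rho>" "\<rho> \<le> 1" "X \<le> Y" "0 < Y"
  shows "(\<integral>\<^sup>+y. ennreal (\<rho> ^ card (B \<union> y)) \<partial>key_ring_pmf X Y)
     \<le> ennreal (\<rho> ^ (card B + X) * (1 + (1/\<rho> - 1) * (real X / real Y)) ^ card B)"
proof -
  have card_K: "0 < real (card (key_rings X Y))"
    using finite_key_rings key_rings_nonempty[OF assms(4)] by (simp add: card_gt_0_iff)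
  show ?thesis
    using assms sum_key_rings_power_card_Un_le[OF assms] card_K
    by (simp add: nn_integral_pmf_of_set_real finite_key_rings key_rings_nonempty
        ennreal_leI divide_simps mult_ac)
qed

lemma nn_integral_Pi_pmf_Union_Suc:
  fixes G :: "'a set \<Rightarrow> ennreal"
  shows "(\<integral>\<^sup>+f. G (\<Union>i<Suc j. f i) \<partial>Pi_pmf {..<Suc j} {} (\<lambda>_. U))
       = (\<integral>\<^sup>+y. \<integral>\<^sup>+f. G (y \<union> (\<Union>i<j. f i)) \<partial>Pi_pmf {..<j} {} (\<lambda>_. U) \<partial>U)"
proof -
  have "Pi_pmf {..<Suc j} {} (\<lambda>_. U) = map_pmf (\<lambda>(y,f). f(j:=y)) (pair_pmf U (Pi_pmf {..<j} {} (\<lambda>_. U)))"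
    unfolding lessThan_Suc by (rule Pi_pmf_insert) auto
  moreover have "(\<Union>i<Suc j. (f(j:=y)) i) = y \<union> (\<Union>i<j. f i)" for f :: "nat \<Rightarrow> 'a set" and y
    by (auto simp: lessThan_Suc)
  ultimately show ?thesis
    by (simp add: nn_integral_pair_pmf')
qed

text \<open>Each ring adds at most \<open>X\<close> keys to \<open>B\<close>, so \<open>(card B + j * X) * j\<close> bounds the total
  exponent of the correction factor accumulated over \<open>j\<close> rings.\<close>
lemma nn_integral_power_card_Union_key_rings_le:
  fixes \<rho> :: real
  assumes "0 < \<rho>" "\<rho> \<le> 1" "X \<le> Y" "0 < Y" "finite B"
  defines "\<gamma> \<equiv> 1 + (1/\<rho> - 1) * (real X / real Y)"
  shows "(\<integral>\<^sup>+f. ennreal (\<rho> ^ card (B \<union> (\<Union>i<j. f i))) \<partial>Pi_pmf {..<j} {} (\<lambda>_. key_ring_pmf X Y))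
     \<le> ennreal (\<rho> ^ (card B + j * X) * \<gamma> ^ ((card B + j * X) * j))"
  using assms(5)
proof (induction j arbitrary: B)
  case 0
  then show ?case by simp
next
  case (Suc j)
  let ?U = "key_ring_pmf X Y"
  have \<gamma>_ge_1: "1 \<le> \<gamma>" using assms by (simp add: \<gamma>_def)
  define c where "c = \<rho> ^ (j * X) * \<gamma> ^ ((card B + Suc j * X) * j)"
  have c_nonneg: "0 \<le> c" using assms \<gamma>_ge_1 by (simp add: c_def)
  have IH: "(\<integral>\<^sup>+f. ennreal (\<rho> ^ card ((B \<union> y) \<union> (\<Union>i<j. f i))) \<partial>Pi_pmf {..<j} {} (\<lambda>_. ?U))
      \<le> ennreal c * ennreal (\<rho> ^ card (B \<union> y))" if "y \<in> set_pmf ?U" for y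
  proof -
    have y: "finite y" "card y = X"
      using that key_ringsD set_pmf_key_ring_pmf[OF assms(3)] by auto
    have "card (B \<union> y) \<le> card B + X" using card_Un_le[of B y] y by simp
    then have "\<rho> ^ (card (B \<union> y) + j * X) * \<gamma> ^ ((card (B \<union> y) + j * X) * j)
        \<le> c * \<rho> ^ card (B \<union> y)"
      using assms \<gamma>_ge_1 mult_left_mono[OF power_increasing[OF _ \<gamma>_ge_1], of "(card (B \<union> y) + j * X) * j"
          "(card B + Suc j * X) * j" "\<rho> ^ (card (B \<union> y) + j * X)"]
      by (simp add: c_def power_add mult_ac)
    then show ?thesis
      using Suc.IH[of "B \<union> y"] Suc.prems y assms
      by (simp add: \<gamma>_def ennreal_mult''[symmetric] order_trans[OF _ ennreal_leI])
  qed
  have "(\<integral>\<^sup>+f. ennreal (\<rho> ^ card (B \<union> (\<Union>i<Suc j. f i))) \<partial>Pi_pmf {..<Suc j} {} (\<lambda>_. ?U))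
      = (\<integral>\<^sup>+y. \<integral>\<^sup>+f. ennreal (\<rho> ^ card ((B \<union> y) \<union> (\<Union>i<j. f i))) \<partial>Pi_pmf {..<j} {} (\<lambda>_. ?U) \<partial>?U)"
    using nn_integral_Pi_pmf_Union_Suc[where G = "\<lambda>T. ennreal (\<rho> ^ card (B \<union> T))" and U = ?U]
    by (simp add: Un_assoc)
  also have "\<dots> \<le> (\<integral>\<^sup>+y. ennreal c * ennreal (\<rho> ^ card (B \<union> y)) \<partial>?U)"
    using IH by (intro nn_integral_mono_AE AE_pmfI)
  also have "\<dots> = ennreal c * (\<integral>\<^sup>+y. ennreal (\<rho> ^ card (B \<union> y)) \<partial>?U)"
    by (rule nn_integral_cmult) simp
  also have "\<dots> \<le> ennreal c * ennreal (\<rho> ^ (card B + X) * \<gamma> ^ card B)"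
    unfolding \<gamma>_def
    by (intro mult_left_mono nn_integral_key_ring_power_card_Un_le Suc.prems assms) simp
  also have "\<dots> \<le> ennreal (\<rho> ^ (card B + Suc j * X) * \<gamma> ^ ((card B + Suc j * X) * Suc j))"
  proof -
    have "\<gamma> ^ ((card B + Suc j * X) * j) * \<gamma> ^ card B \<le> \<gamma> ^ ((card B + Suc j * X) * Suc j)"
      unfolding power_add[symmetric] using \<gamma>_ge_1 by (intro power_increasing) auto
    then have "c * (\<rho> ^ (card B + X) * \<gamma> ^ card B)
        \<le> \<rho> ^ (card B + Suc j * X) * \<gamma> ^ ((card B + Suc j * X) * Suc j)"
      using assms mult_left_mono by (simp add: c_def power_add mult_ac)
    then show ?thesis
      using assms \<gamma>_ge_1 c_nonneg by (simp add: ennreal_mult''[symmetric] ennreal_leI)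
  qed
  finally show ?case .
qed

section \<open>The number of neighbours of \<open>v\<^sub>1, \<dots>, v\<^sub>m\<close>\<close>

lemma map_pmf_bool_eq_bernoulli:
  "map_pmf P M = bernoulli_pmf (measure_pmf.prob M {x. P x})"
proof (rule pmf_eqI)
  fix b :: bool
  have "measure_pmf.prob M {x. \<not> P x} = 1 - measure_pmf.prob M {x. P x}"
    using measure_pmf.prob_compl[of "{x. P x}" M]
    by (simp add: Compl_eq_Diff_UNIV[symmetric] Collect_neg_eq[symmetric])
  then show "pmf (map_pmf P M) b = pmf (bernoulli_pmf (measure_pmf.prob M {x. P x})) b"
    by (cases b) (simp_all add: pmf_map vimage_def)
qed

lemma prob_binomial_pmf_atMost_le:
  assumes "r \<le> N" "0 \<le> p" "p \<le> 1"
  shows "measure_pmf.prob (binomial_pmf N p) {..r}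
           \<le> real (r + 1) * max 1 (real N * p) ^ r * (1 - p) ^ (N - r)"
proof -
  have term_le: "real (N choose a) * p ^ a * (1 - p) ^ (N - a) \<le> max 1 (real N * p) ^ r * (1 - p) ^ (N - r)"
    if "a \<le> r" for a
  proof -
    have "real (N choose a) * p ^ a \<le> (real N * p) ^ a"
      using assms binomial_le_pow[of a N] that
      by (simp add: power_mult_distrib mult_right_mono flip: of_nat_power)
    also have "\<dots> \<le> max 1 (real N * p) ^ r"
      using that assms by (intro order_trans[OF power_mono power_increasing]) auto
    finally show ?thesis
      using that assms by (intro mult_mono power_decreasing) auto
  qed
  have "measure_pmf.prob (binomial_pmf N p) {..r} = (\<Sum>a\<le>r. real (N choose a) * p ^ a * (1 - p) ^ (N - a))"
    using assms by (simp add: measure_measure_pmf_finite)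
  also have "\<dots> \<le> (\<Sum>a\<le>r. max 1 (real N * p) ^ r * (1 - p) ^ (N - r))"
    using term_le by (intro sum_mono) auto
  finally show ?thesis by simp
qed

lemma prob_Pi_pmf_card_meets:
  fixes T :: "'b set" and U :: "'b set pmf"
  assumes "finite J"
  shows "measure_pmf.prob (Pi_pmf J {} (\<lambda>_. U)) {g. card {j\<in>J. g j \<inter> T \<noteq> {}} \<le> r}
         = measure_pmf.prob (binomial_pmf (card J) (measure_pmf.prob U {s. s \<inter> T \<noteq> {}})) {..r}"
proof -
  define p where "p = measure_pmf.prob U {s. s \<inter> T \<noteq> {}}"
  have "map_pmf (\<lambda>g. card {j\<in>J. g j \<inter> T \<noteq> {}}) (Pi_pmf J {} (\<lambda>_. U))
      = map_pmf (\<lambda>b. card {j\<in>J. b j}) (map_pmf (\<lambda>g. (\<lambda>s. s \<inter> T \<noteq> {}) \<circ> g) (Pi_pmf J {} (\<lambda>_. U)))"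
    by (simp add: map_pmf_comp o_def)
  also have "map_pmf (\<lambda>g. (\<lambda>s. s \<inter> T \<noteq> {}) \<circ> g) (Pi_pmf J {} (\<lambda>_. U))
      = Pi_pmf J False (\<lambda>_. map_pmf (\<lambda>s. s \<inter> T \<noteq> {}) U)"
    using assms by (intro Pi_pmf_map[symmetric]) auto
  also have "map_pmf (\<lambda>s. s \<inter> T \<noteq> {}) U = bernoulli_pmf p"
    unfolding p_def by (rule map_pmf_bool_eq_bernoulli)
  also have "map_pmf (\<lambda>b. card {j\<in>J. b j}) (Pi_pmf J False (\<lambda>_. bernoulli_pmf p)) = binomial_pmf (card J) p"
    using assms by (intro binomial_pmf_altdef'[symmetric]) (auto simp: p_def)
  finally have "map_pmf (\<lambda>g. card {j\<in>J. g j \<inter> T \<noteq> {}}) (Pi_pmf J {} (\<lambda>_. U)) = binomial_pmf (card J) p" .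
  then have "measure_pmf.prob (binomial_pmf (card J) p) {..r}
      = measure_pmf.prob (Pi_pmf J {} (\<lambda>_. U)) ((\<lambda>g. card {j\<in>J. g j \<inter> T \<noteq> {}}) -` {..r})"
    by (metis measure_map_pmf)
  then show ?thesis by (simp add: vimage_def p_def)
qed

lemma Union_nbr_set_eq:
  assumes "\<And>x. x < m \<Longrightarrow> S x = f x" "\<And>x. m \<le> x \<Longrightarrow> S x = g x"
  shows "(\<Union>i\<in>{1..m}. nbr_set n m S i) = {j\<in>{m..<n}. g j \<inter> (\<Union>i<m. f i) \<noteq> {}}"
proof (intro equalityI subsetI)
  fix j assume "j \<in> (\<Union>i\<in>{1..m}. nbr_set n m S i)"
  then obtain i where "i \<in> {1..m}" "j \<in> nbr_set n m S i" by blast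
  then have i: "i - 1 < m" "m \<le> j" "j < n" "S (i - 1) \<inter> S j \<noteq> {}"
    by (auto simp: nbr_set_def rkg_adj_def)
  then have "f (i - 1) \<inter> g j \<noteq> {}" using assms by simp
  then show "j \<in> {j\<in>{m..<n}. g j \<inter> (\<Union>i<m. f i) \<noteq> {}}" using i by auto
next
  fix j assume "j \<in> {j\<in>{m..<n}. g j \<inter> (\<Union>i<m. f i) \<noteq> {}}"
  then obtain i where "i < m" "g j \<inter> f i \<noteq> {}" "m \<le> j" "j < n" by auto
  then have "Suc i \<in> {1..m}" "j \<in> nbr_set n m S (Suc i)"
    using assms by (auto simp: nbr_set_def rkg_adj_def)
  then show "j \<in> (\<Union>i\<in>{1..m}. nbr_set n m S i)" by blast
qed

lemma emeasure_rkg_card_Union_nbr_set: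
  assumes "m \<le> n"
  shows "emeasure (rkg n X Y) {S. card (\<Union>i\<in>{1..m}. nbr_set n m S i) \<le> r}
    = (\<integral>\<^sup>+f. ennreal (measure_pmf.prob
           (binomial_pmf (n - m) (measure_pmf.prob (key_ring_pmf X Y) {s. s \<inter> (\<Union>i<m. f i) \<noteq> {}})) {..r})
         \<partial>Pi_pmf {..<m} {} (\<lambda>_. key_ring_pmf X Y))"
proof -
  let ?U = "key_ring_pmf X Y"
  define A where "A = Pi_pmf {..<m} {} (\<lambda>_. ?U)"
  define B where "B = Pi_pmf {m..<n} {} (\<lambda>_. ?U)"
  define join where "join = (\<lambda>(f::nat \<Rightarrow> nat set, g::nat \<Rightarrow> nat set) x. if x \<in> {..<m} then f x else g x)"
  define E where "E = {S. card (\<Union>i\<in>{1..m}. nbr_set n m S i) \<le> r}"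
  define meets where
    "meets f = {g :: nat \<Rightarrow> nat set. card {j\<in>{m..<n}. g j \<inter> (\<Union>i<m. f i) \<noteq> {}} \<le> r}"
    for f :: "nat \<Rightarrow> nat set"
  have "{..<n} = {..<m} \<union> {m..<n}" using assms by auto
  then have "rkg n X Y = Pi_pmf ({..<m} \<union> {m..<n}) {} (\<lambda>_. ?U)" by (simp add: rkg_def)
  also have "\<dots> = map_pmf join (pair_pmf A B)"
    unfolding join_def A_def B_def by (rule Pi_pmf_union) auto
  finally have "emeasure (rkg n X Y) E = (\<integral>\<^sup>+f. \<integral>\<^sup>+g. indicator (join -` E) (f, g) \<partial>B \<partial>A)"
    by (simp add: nn_integral_pair_pmf' flip: nn_integral_indicator)
  also have "\<dots> = (\<integral>\<^sup>+f. emeasure B (meets f) \<partial>A)"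
  proof (intro nn_integral_cong)
    fix f
    have "indicator (join -` E) (f, g) = (indicator (meets f) g :: ennreal)" for g
      using Union_nbr_set_eq[of m "join (f, g)" f g n]
      by (simp add: join_def indicator_def E_def meets_def)
    then show "(\<integral>\<^sup>+g. indicator (join -` E) (f, g) \<partial>B) = emeasure B (meets f)"
      by (simp add: nn_integral_indicator)
  qed
  also have "\<dots> = (\<integral>\<^sup>+f. ennreal (measure_pmf.prob
           (binomial_pmf (n - m) (measure_pmf.prob ?U {s. s \<inter> (\<Union>i<m. f i) \<noteq> {}})) {..r}) \<partial>A)"
    unfolding B_def meets_def measure_pmf.emeasure_eq_measure
    by (subst prob_Pi_pmf_card_meets) auto
  finally show ?thesis by (simp add: E_def A_def)
qed

lemma prob_binomial_key_ring_meets_le: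
  assumes "T \<subseteq> {..<Y}" "card T \<le> m * X" "r \<le> N" "X \<le> Y" "0 < Y"
  shows "measure_pmf.prob (binomial_pmf N (measure_pmf.prob (key_ring_pmf X Y) {s. s \<inter> T \<noteq> {}})) {..r}
     \<le> real (r + 1) * max 1 (real N * real m * (real X * real X / real Y)) ^ r
       * exp (- real (N - r) * key_harmonic X Y) ^ card T"
proof -
  define p where "p = measure_pmf.prob (key_ring_pmf X Y) {s. s \<inter> T \<noteq> {}}"
  have p: "0 \<le> p" "p \<le> 1" by (auto simp: p_def)
  have "p \<le> real (card T) * (real X / real Y)"
    unfolding p_def using prob_key_ring_meets_le[OF assms(1,4,5)] .
  also have "\<dots> \<le> real m * real X * (real X / real Y)"
    using assms(2) by (intro mult_right_mono) (auto simp flip: of_nat_mult)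
  finally have "real N * p \<le> real N * (real m * real X * (real X / real Y))"
    by (rule mult_left_mono) simp
  then have "max 1 (real N * p) ^ r \<le> max 1 (real N * real m * (real X * real X / real Y)) ^ r"
    by (intro power_mono max.mono) (auto simp: mult_ac)
  moreover have "(1 - p) ^ (N - r) \<le> exp (- real (card T) * key_harmonic X Y) ^ (N - r)"
    using prob_key_ring_avoids_le_exp[OF assms(1,4)] p by (intro power_mono) (auto simp: p_def)
  ultimately have "real (r + 1) * max 1 (real N * p) ^ r * (1 - p) ^ (N - r)
      \<le> real (r + 1) * max 1 (real N * real m * (real X * real X / real Y)) ^ r
        * exp (- real (N - r) * key_harmonic X Y) ^ card T"
    using p by (intro mult_mono) (auto simp: mult_ac simp flip: exp_of_nat_mult power_mult)
  then show ?thesis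
    using prob_binomial_pmf_atMost_le[OF assms(3) p] unfolding p_def by linarith
qed

lemma prob_card_Union_nbr_set_le:
  assumes "m + r \<le> n" "X \<le> Y" "0 < Y"
  defines "\<rho> \<equiv> exp (- real (n - m - r) * key_harmonic X Y)"
  shows "measure_pmf.prob (rkg n X Y) {S. card (\<Union>i\<in>{1..m}. nbr_set n m S i) \<le> r}
     \<le> real (r + 1) * max 1 (real (n - m) * real m * (real X * real X / real Y)) ^ r
       * (\<rho> ^ (m * X) * (1 + (1 / \<rho> - 1) * (real X / real Y)) ^ (m * X * m))"
proof -
  let ?U = "key_ring_pmf X Y"
  define C where "C = real (r + 1) * max 1 (real (n - m) * real m * (real X * real X / real Y)) ^ r"
  have \<rho>: "0 < \<rho>" "\<rho> \<le> 1" using key_harmonic_nonneg[OF assms(2)] by (auto simp: \<rho>_def)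
  have C_nonneg: "0 \<le> C" by (simp add: C_def)
  have tail_le: "measure_pmf.prob (binomial_pmf (n - m) (measure_pmf.prob ?U {s. s \<inter> (\<Union>i<m. f i) \<noteq> {}})) {..r}
      \<le> C * \<rho> ^ card ({} \<union> (\<Union>i<m. f i))"
    if "f \<in> set_pmf (Pi_pmf {..<m} {} (\<lambda>_. ?U))" for f
  proof -
    have f: "f i \<in> key_rings X Y" if "i < m" for i
      using \<open>f \<in> _\<close> that set_pmf_key_ring_pmf[OF assms(2)] by (auto simp: set_Pi_pmf PiE_dflt_def)
    have "card (\<Union>i<m. f i) \<le> (\<Sum>i<m. card (f i))" by (rule card_UN_le) simp
    also have "\<dots> = (\<Sum>i<m. X)" using f key_ringsD(2) by (intro sum.cong) auto
    finally show ?thesis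
      using prob_binomial_key_ring_meets_le[of "\<Union>i<m. f i" Y m X r "n - m"] f key_ringsD(1) assms
      by (force simp: C_def \<rho>_def)
  qed
  have "ennreal (measure_pmf.prob (rkg n X Y) {S. card (\<Union>i\<in>{1..m}. nbr_set n m S i) \<le> r})
      = (\<integral>\<^sup>+f. ennreal (measure_pmf.prob (binomial_pmf (n - m)
            (measure_pmf.prob ?U {s. s \<inter> (\<Union>i<m. f i) \<noteq> {}})) {..r}) \<partial>Pi_pmf {..<m} {} (\<lambda>_. ?U))"
    using emeasure_rkg_card_Union_nbr_set[of m n X Y r] assms by (simp add: measure_pmf.emeasure_eq_measure)
  also have "\<dots> \<le> (\<integral>\<^sup>+f. ennreal C * ennreal (\<rho> ^ card ({} \<union> (\<Union>i<m. f i))) \<partial>Pi_pmf {..<m} {} (\<lambda>_. ?U))"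
    using tail_le \<rho> by (intro nn_integral_mono_AE AE_pmfI) (simp add: ennreal_mult''[symmetric] ennreal_leI)
  also have "\<dots> = ennreal C * (\<integral>\<^sup>+f. ennreal (\<rho> ^ card ({} \<union> (\<Union>i<m. f i))) \<partial>Pi_pmf {..<m} {} (\<lambda>_. ?U))"
    by (rule nn_integral_cmult) simp
  also have "\<dots> \<le> ennreal C * ennreal (\<rho> ^ (m * X) * (1 + (1 / \<rho> - 1) * (real X / real Y)) ^ (m * X * m))"
    using nn_integral_power_card_Union_key_rings_le[OF \<rho> assms(2,3), of "{}" m] by (intro mult_left_mono) auto
  also have "\<dots> = ennreal (C * (\<rho> ^ (m * X) * (1 + (1 / \<rho> - 1) * (real X / real Y)) ^ (m * X * m)))"
    using C_nonneg by (simp add: ennreal_mult')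
  finally show ?thesis
    using C_nonneg \<rho> by (subst (asm) ennreal_le_iff) (auto simp: C_def)
qed

section \<open>Estimates in terms of the edge probability\<close>

lemma neg_ln_one_minus_le:
  fixes q :: real
  assumes "0 \<le> q" "q \<le> 1/2"
  shows "- ln (1 - q) \<le> 2 * q"
proof -
  have "- q - 2 * q\<^sup>2 \<le> ln (1 - q)" using assms by (intro ln_one_minus_pos_lower_bound) auto
  moreover have "q\<^sup>2 \<le> q / 2" using assms mult_left_mono[of q "1/2" q] by (simp add: power2_eq_square)
  ultimately show ?thesis by simp
qed

lemma rkg_edge_prob_le: "X \<le> Y \<Longrightarrow> 0 < Y \<Longrightarrow> rkg_edge_prob X Y \<le> real X * real X / real Y"
  using prob_key_ring_meets_le[of "{..<X}" Y X] by (simp add: rkg_edge_prob_eq_prob)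

lemma rkg_edge_prob_ge:
  assumes "X \<le> Y" "rkg_edge_prob X Y < 1"
  shows "real X * real X / real Y \<le> - ln (1 - rkg_edge_prob X Y)"
proof -
  have "1 - rkg_edge_prob X Y \<le> exp (- real X * key_harmonic X Y)"
    using prob_key_ring_avoids_le_exp[of "{..<X}" Y X] assms by (simp add: rkg_edge_prob_eq_prob)
  also have "\<dots> \<le> exp (- (real X * real X / real Y))"
    using mult_left_mono[OF key_harmonic_ge[OF assms(1)], of "real X"] by simp
  finally have "ln (1 - rkg_edge_prob X Y) \<le> - (real X * real X / real Y)"
    using assms(2) by (metis ln_exp ln_le_cancel_iff exp_gt_zero diff_gt_0_iff_gt)
  then show ?thesis by simp
qed

lemma key_harmonic_le_neg_ln_rkg_edge_prob:
  assumes "2 \<le> X" "X \<le> Y" "rkg_edge_prob X Y \<le> 1/2"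
  defines "lq \<equiv> - ln (1 - rkg_edge_prob X Y)"
  shows "key_harmonic X Y \<le> lq / (2 - lq)"
proof -
  define u where "u = real X * real X / real Y"
  have Y_pos: "0 < Y" using assms by simp
  have q_nonneg: "0 \<le> rkg_edge_prob X Y"
    using assms by (simp add: rkg_edge_prob_eq_prob)
  have u_le: "u \<le> lq" using rkg_edge_prob_ge[OF assms(2)] assms(3) by (simp add: u_def lq_def)
  have lq_le: "lq \<le> 1" using neg_ln_one_minus_le[OF q_nonneg assms(3)] assms(3) by (simp add: lq_def)
  have "real X * real X / real Y \<le> 1" using u_le lq_le by (simp add: u_def)
  then have "real X * real X \<le> real Y" using Y_pos by (simp add: pos_divide_le_eq)
  moreover have "2 * real X \<le> real X * real X" using assms by (intro mult_right_mono) auto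
  ultimately have X_less: "X < Y" using assms by linarith
  have "key_harmonic X Y \<le> real X / (real Y - real X)" by (rule key_harmonic_le[OF X_less])
  also have "\<dots> \<le> u / (2 - u)"
  proof -
    have "real X * (2 * real Y) \<le> real X * (real X * real Y)"
      using assms by (intro mult_left_mono mult_right_mono) auto
    then have "real X * (2 - u) \<le> u * (real Y - real X)"
      using Y_pos by (simp add: u_def divide_simps algebra_simps)
    moreover have "0 < real Y - real X" "0 < 2 - u" using X_less u_le lq_le by auto
    ultimately show ?thesis by (simp add: divide_simps mult_ac)
  qed
  also have "\<dots> \<le> lq / (2 - lq)"
    using u_le lq_le by (simp add: divide_simps algebra_simps)
  finally show ?thesis .
qed

text \<open>With \<open>\<lambda> = -ln (1 - q)\<close>, the quantity \<open>exp (n \<lambda> / (2 - \<lambda>)) \<lambda>\<close> dominates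
  \<open>(1/\<rho> - 1) X\<^sup>2 / Y\<close>, the per-pair cost of overlaps between the key rings of
  \<open>v\<^sub>1, \<dots>, v\<^sub>m\<close>.\<close>
definition collision_factor :: "nat \<Rightarrow> real \<Rightarrow> real" where
  "collision_factor n q = exp (real n * (- ln (1 - q)) / (2 - (- ln (1 - q)))) * (- ln (1 - q))"

lemma collision_factor_mono:
  assumes "0 \<le> q" "q \<le> q'" "q' \<le> 1/2"
  shows "collision_factor n q \<le> collision_factor n q'"
proof -
  define a where "a = - ln (1 - q)"
  define b where "b = - ln (1 - q')"
  have a_nonneg: "0 \<le> a" and a_le_b: "a \<le> b" using assms by (simp_all add: a_def b_def)
  have "b \<le> 1" using neg_ln_one_minus_le[of q'] assms by (simp add: b_def)
  then have "a / (2 - a) \<le> b / (2 - b)"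
    using a_le_b by (simp add: divide_simps algebra_simps)
  then have "exp (real n * a / (2 - a)) * a \<le> exp (real n * b / (2 - b)) * b"
    using a_nonneg a_le_b mult_left_mono[of "a / (2 - a)" "b / (2 - b)" "real n"]
    by (intro mult_mono) auto
  then show ?thesis by (simp add: collision_factor_def a_def b_def)
qed

lemma power_exp_key_harmonic_le:
  assumes "X \<le> Y" "0 < Y" "0 \<le> t"
  shows "exp (- t * key_harmonic X Y) ^ (m * X) \<le> exp (- t * real m * rkg_edge_prob X Y)"
proof -
  have "rkg_edge_prob X Y \<le> real X * key_harmonic X Y"
    using rkg_edge_prob_le[OF assms(1,2)] mult_left_mono[OF key_harmonic_ge[OF assms(1)], of "real X"]
    by simp
  then show ?thesis
    using mult_left_mono[of "rkg_edge_prob X Y" "real X * key_harmonic X Y" "t * real m"] assms(3)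
    by (simp add: mult_ac flip: exp_of_nat_mult)
qed

lemma overlap_correction_le_exp:
  fixes N n m X Y :: nat
  defines "q \<equiv> rkg_edge_prob X Y" and "\<rho> \<equiv> exp (- real N * key_harmonic X Y)"
  assumes "N \<le> n" "2 \<le> X" "X \<le> Y" "q \<le> 1/2" "real m ^ 2 * collision_factor n q \<le> 1"
  shows "(1 + (1 / \<rho> - 1) * (real X / real Y)) ^ (m * X * m) \<le> exp 1"
proof -
  define u where "u = real X * real X / real Y"
  define lq where "lq = - ln (1 - q)"
  have u_nonneg: "0 \<le> u" by (simp add: u_def)
  have H_nonneg: "0 \<le> key_harmonic X Y" using key_harmonic_nonneg[OF assms(5)] .
  have u_le_lq: "u \<le> lq" using rkg_edge_prob_ge[OF assms(5)] assms(6) by (simp add: u_def lq_def q_def)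
  have inv_\<rho>: "1 / \<rho> = exp (real N * key_harmonic X Y)" by (simp add: \<rho>_def exp_minus field_simps)
  have "real N * key_harmonic X Y \<le> real n * (lq / (2 - lq))"
    using key_harmonic_le_neg_ln_rkg_edge_prob[OF assms(4,5)] assms(3,6) H_nonneg
    by (intro mult_mono) (auto simp: lq_def q_def)
  then have "1 / \<rho> * u \<le> exp (real n * lq / (2 - lq)) * lq"
    unfolding inv_\<rho> using u_le_lq u_nonneg by (intro mult_mono) auto
  then have "(1 / \<rho> - 1) * u \<le> collision_factor n q"
    using u_nonneg by (simp add: collision_factor_def lq_def algebra_simps)
  then have exponent_le: "real m ^ 2 * ((1 / \<rho> - 1) * u) \<le> 1"
    using assms(7) by (meson mult_left_mono order_trans zero_le_power2)
  have "(1 + (1 / \<rho> - 1) * (real X / real Y)) ^ (m * X * m)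
      \<le> exp ((1 / \<rho> - 1) * (real X / real Y)) ^ (m * X * m)"
    using inv_\<rho> H_nonneg by (intro power_mono exp_ge_add_one_self) (simp add: mult_nonneg_nonneg)
  also have "\<dots> = exp (real m ^ 2 * ((1 / \<rho> - 1) * u))"
    by (simp add: u_def power2_eq_square mult_ac flip: exp_of_nat_mult)
  also have "\<dots> \<le> exp 1"
    using exponent_le by simp
  finally show ?thesis .
qed

lemma prob_card_Union_nbr_set_le_exp:
  fixes m r n X Y :: nat
  defines "q \<equiv> rkg_edge_prob X Y"
  assumes "1 \<le> m" "m + r \<le> n" "2 \<le> X" "X \<le> Y" "0 < q" "q \<le> 1/2"
    and "real ((m + r) * m) * q \<le> 1" "1 \<le> real n * q" "real m ^ 2 * collision_factor n q \<le> 1"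
  shows "measure_pmf.prob (rkg n X Y) {S. card (\<Union>i\<in>{1..m}. nbr_set n m S i) \<le> r}
     \<le> real (r + 1) * (2 * real m) ^ r * exp 2 * (real n * q) ^ r * exp (- real m * real n * q)"
proof -
  define u where "u = real X * real X / real Y"
  define \<rho> where "\<rho> = exp (- real (n - m - r) * key_harmonic X Y)"
  have Y_pos: "0 < Y" using assms by simp
  have "1 / \<rho> = exp (real (n - m - r) * key_harmonic X Y)" by (simp add: \<rho>_def exp_minus field_simps)
  then have "1 \<le> 1 / \<rho>" using key_harmonic_nonneg[OF assms(5)] by simp
  then have correction_nonneg: "0 \<le> 1 + (1 / \<rho> - 1) * (real X / real Y)"
    by (intro add_nonneg_nonneg mult_nonneg_nonneg) auto
  have M_le: "max 1 (real (n - m) * real m * u) \<le> 2 * real m * (real n * q)"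
  proof (rule max.boundedI)
    show "1 \<le> 2 * real m * (real n * q)"
      using assms(2,9) mult_mono[of 1 "2 * real m" 1 "real n * q"] by simp
    have "u \<le> 2 * q"
      using rkg_edge_prob_ge[OF assms(5)] neg_ln_one_minus_le[of q] assms(6,7) by (simp add: u_def q_def)
    then have "real (n - m) * u \<le> real n * (2 * q)"
      using assms(6) by (intro mult_mono) (auto simp: u_def)
    then show "real (n - m) * real m * u \<le> 2 * real m * (real n * q)"
      using mult_right_mono[of _ _ "real m"] by (fastforce simp: mult_ac)
  qed
  have \<rho>_power: "\<rho> ^ (m * X) \<le> exp (- real m * real n * q) * exp 1"
  proof -
    have "\<rho> ^ (m * X) \<le> exp (- real (n - m - r) * real m * q)"
      using power_exp_key_harmonic_le[OF assms(5) Y_pos] by (simp add: \<rho>_def q_def)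
    also have "- real (n - m - r) * real m * q = - real m * real n * q + real ((m + r) * m) * q"
      using assms(3) by (simp add: of_nat_diff algebra_simps)
    also have "exp \<dots> \<le> exp (- real m * real n * q + 1)"
      using assms(8) by simp
    finally show ?thesis by (simp add: exp_add[symmetric])
  qed
  have "measure_pmf.prob (rkg n X Y) {S. card (\<Union>i\<in>{1..m}. nbr_set n m S i) \<le> r}
     \<le> real (r + 1) * max 1 (real (n - m) * real m * u) ^ r
       * (\<rho> ^ (m * X) * (1 + (1 / \<rho> - 1) * (real X / real Y)) ^ (m * X * m))"
    using prob_card_Union_nbr_set_le[OF assms(3,5) Y_pos] by (simp add: u_def \<rho>_def)
  also have "\<dots> \<le> real (r + 1) * (2 * real m * (real n * q)) ^ r * (exp (- real m * real n * q) * exp 1 * exp 1)"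
    using M_le \<rho>_power overlap_correction_le_exp[of "n - m - r" n X Y m] assms(4-7,10) correction_nonneg
    by (intro mult_mono power_mono) (auto simp: \<rho>_def q_def)
  also have "\<dots> = real (r + 1) * (2 * real m) ^ r * exp 2 * (real n * q) ^ r * exp (- real m * real n * q)"
    by (simp add: power_mult_distrib mult_ac flip: exp_add)
  finally show ?thesis .
qed

section \<open>Asymptotics\<close>

lemma edge_prob_asymptotics:
  fixes q \<alpha> :: "nat \<Rightarrow> real" and k :: nat
  assumes "1 \<le> k"
    and "eventually (\<lambda>n. q n = (ln (real n) + (real k - 1) * ln (ln (real n)) + \<alpha> n) / real n) sequentially"
    and "\<alpha> \<in> o(\<lambda>n. ln (real n))"
  shows "eventually (\<lambda>n. 3/4 * ln (real n) \<le> real n * q n \<and> real n * q n \<le> 3/2 * ln (real n)) sequentially"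
proof -
  have "(\<lambda>n. ln (ln (real n))) \<in> o(\<lambda>n. ln (real n))" by real_asymp
  then have lnln_small: "eventually (\<lambda>n. \<bar>ln (ln (real n))\<bar> \<le> 1 / (4 * real k) * \<bar>ln (real n)\<bar>) sequentially"
    using assms(1) by (auto dest!: landau_o.smallD[where c = "1 / (4 * real k)"])
  have \<alpha>_small: "eventually (\<lambda>n. \<bar>\<alpha> n\<bar> \<le> 1/4 * \<bar>ln (real n)\<bar>) sequentially"
    using landau_o.smallD[OF assms(3), of "1/4"] by simp
  have lnln_ge: "eventually (\<lambda>n. 1 \<le> ln (ln (real n))) sequentially" by real_asymp
  have ln_ge: "eventually (\<lambda>n. 1 \<le> ln (real n)) sequentially" by real_asymp
  from assms(2) lnln_small \<alpha>_small lnln_ge ln_ge eventually_gt_at_top[of 0]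
  show ?thesis
  proof eventually_elim
    case (elim n)
    have "(real k - 1) * ln (ln (real n)) \<le> real k * (1 / (4 * real k) * ln (real n))"
      using elim assms(1) by (intro mult_mono) auto
    then have "(real k - 1) * ln (ln (real n)) \<le> ln (real n) / 4"
      using assms(1) by simp
    moreover have "0 \<le> (real k - 1) * ln (ln (real n))" using elim assms(1) by simp
    moreover have "\<bar>\<alpha> n\<bar> \<le> ln (real n) / 4" using elim by simp
    moreover have "real n * q n = ln (real n) + (real k - 1) * ln (ln (real n)) + \<alpha> n"
      using elim by simp
    ultimately show ?case by linarith
  qed
qed

lemma eventually_prob_card_Union_nbr_set_le:
  fixes X Y :: "nat \<Rightarrow> nat" and m r :: nat
  defines "q \<equiv> \<lambda>n. rkg_edge_prob (X n) (Y n)"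
  assumes "1 \<le> m" "\<And>n. X n \<le> Y n" "eventually (\<lambda>n. 2 \<le> X n) sequentially"
    and "eventually (\<lambda>n. 3/4 * ln (real n) \<le> real n * q n \<and> real n * q n \<le> 3/2 * ln (real n)) sequentially"
  shows "eventually (\<lambda>n. measure_pmf.prob (rkg n (X n) (Y n)) {S. card (\<Union>i\<in>{1..m}. nbr_set n m S i) \<le> r}
           \<le> real (r + 1) * (2 * real m) ^ r * exp 2 * (real n * q n) ^ r * exp (- real m * real n * q n))
         sequentially"
proof -
  have "((\<lambda>n. 3/2 * ln (real n) / real n) \<longlongrightarrow> 0) sequentially" by real_asymp
  then have small_q: "eventually (\<lambda>n. 3/2 * ln (real n) / real n < min (1/2) (1 / real ((m + r) * m))) sequentially"
    using assms(2) by (intro order_tendstoD) auto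
  have "((\<lambda>n. collision_factor n (3/2 * ln (real n) / real n)) \<longlongrightarrow> 0) sequentially"
    unfolding collision_factor_def by real_asymp
  then have small_collisions: "eventually (\<lambda>n. collision_factor n (3/2 * ln (real n) / real n) < 1 / real m ^ 2) sequentially"
    using assms(2) by (intro order_tendstoD) auto
  have ln_ge: "eventually (\<lambda>n::nat. 1 \<le> 3/4 * ln (real n)) sequentially" by real_asymp
  from assms(4,5) small_q small_collisions ln_ge eventually_ge_at_top[of "m + r"] eventually_gt_at_top[of 0]
  show ?thesis
  proof eventually_elim
    case (elim n)
    define b where "b = 3/2 * ln (real n) / real n"
    have n_pos: "0 < real n" using elim by simp
    have n_q: "1 \<le> real n * q n" using elim by linarith
    then have q_pos: "0 < q n" using zero_less_mult_pos[of "real n" "q n"] n_pos by linarith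
    have "real n * q n \<le> 3/2 * ln (real n)" using elim by simp
    then have q_le: "q n \<le> b" using n_pos by (simp add: b_def field_simps)
    have "b < 1/2" "b < 1 / real ((m + r) * m)" using elim unfolding b_def by simp_all
    then have q_half: "q n \<le> 1/2" and "q n < 1 / real ((m + r) * m)" using q_le by linarith+
    then have pairs: "real ((m + r) * m) * q n \<le> 1"
      using assms(2) by (simp add: less_divide_eq mult.commute del: of_nat_mult)
    have "real m ^ 2 * collision_factor n (q n) \<le> real m ^ 2 * collision_factor n b"
      using collision_factor_mono[of "q n" b n] q_pos q_le elim by (intro mult_left_mono) (auto simp: b_def)
    also have "\<dots> \<le> 1"
      using elim assms(2) by (simp add: b_def field_simps)
    finally have collisions: "real m ^ 2 * collision_factor n (q n) \<le> 1" .
    show ?case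
      using prob_card_Union_nbr_set_le_exp[of m r n "X n" "Y n"] assms(2,3) elim q_pos q_half pairs n_q collisions
      unfolding q_def by blast
  qed
qed

lemma smallo_power_Suc_of_le:
  fixes P L E :: "'a \<Rightarrow> real"
  assumes "filterlim L at_top F" "\<And>x. 0 \<le> P x" "\<And>x. 0 \<le> E x"
    and "eventually (\<lambda>x. P x \<le> C * (L x ^ r * E x)) F"
  shows "P \<in> o[F](\<lambda>x. L x ^ Suc r * E x)"
proof -
  have L_pos: "eventually (\<lambda>x. 0 < L x) F"
    using assms(1) unfolding filterlim_at_top_dense by blast
  have "(\<lambda>_. C) \<in> o[F](L)"
  proof (rule smalloI_tendsto)
    show "((\<lambda>x. C / L x) \<longlongrightarrow> 0) F"
      by (rule tendsto_divide_0[OF tendsto_const filterlim_at_top_imp_at_infinity[OF assms(1)]])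
    show "eventually (\<lambda>x. L x \<noteq> 0) F"
      using L_pos by (rule eventually_mono) (metis less_irrefl)
  qed
  then have "(\<lambda>x. C * (L x ^ r * E x)) \<in> o[F](\<lambda>x. L x ^ Suc r * E x)"
    using landau_o.small.mult_right[of "\<lambda>_. C" F L "\<lambda>x. L x ^ r * E x"] by (simp add: mult_ac)
  moreover have "P \<in> O[F](\<lambda>x. C * (L x ^ r * E x))"
    using assms(4) L_pos assms(2,3) by (intro landau_o.big_mono) (auto elim: eventually_elim2)
  ultimately show ?thesis by (rule landau_o.big_small_trans[rotated])
qed

theorem mainTheorem8:
  fixes k m h :: nat and X Y :: "nat \<Rightarrow> nat" and \<alpha> :: "nat \<Rightarrow> real"
  assumes "k \<ge> 1" and "m \<ge> 1"
    and "\<And>n. 1 \<le> X n" and "\<And>n. X n \<le> Y n"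
    and "eventually (\<lambda>n. X n \<ge> 2) sequentially"
    and "eventually (\<lambda>n. rkg_edge_prob (X n) (Y n)
            = (ln (real n) + (real k - 1) * ln (ln (real n)) + \<alpha> n) / real n) sequentially"
    and "\<alpha> \<in> o(\<lambda>n. ln (real n))"
  shows "(\<lambda>n. measure_pmf.prob (rkg n (X n) (Y n))
            {S. int (card (\<Union>i\<in>{1..m}. nbr_set n m S i)) \<le> int h * int m - 1})
         \<in> o(\<lambda>n. (real n * rkg_edge_prob (X n) (Y n)) ^ (h * m)
                  * exp (- real m * real n * rkg_edge_prob (X n) (Y n)))"
proof (cases "h = 0")
  case True
  then show ?thesis by simp
next
  case False
  define r where "r = h * m - 1"
  define q where "q n = rkg_edge_prob (X n) (Y n)" for n
  have hm: "h * m = Suc r" using False assms(2) by (simp add: r_def)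
  have event: "{S. int (card (\<Union>i\<in>{1..m}. nbr_set n m S i)) \<le> int h * int m - 1}
      = {S. card (\<Union>i\<in>{1..m}. nbr_set n m S i) \<le> r}" for n
    using hm by (auto simp flip: of_nat_mult)
  have nq: "eventually (\<lambda>n. 3/4 * ln (real n) \<le> real n * q n \<and> real n * q n \<le> 3/2 * ln (real n)) sequentially"
    using edge_prob_asymptotics[OF assms(1) _ assms(7)] assms(6) by (simp add: q_def)
  have "filterlim (\<lambda>n. 3/4 * ln (real n)) at_top sequentially" by real_asymp
  then have "filterlim (\<lambda>n. real n * q n) at_top sequentially"
    by (rule filterlim_at_top_mono) (use nq in \<open>auto elim: eventually_mono\<close>)
  moreover have "eventually (\<lambda>n. measure_pmf.prob (rkg n (X n) (Y n)) {S. card (\<Union>i\<in>{1..m}. nbr_set n m S i) \<le> r}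
      \<le> real (r + 1) * (2 * real m) ^ r * exp 2 * ((real n * q n) ^ r * exp (- real m * real n * q n))) sequentially"
    using eventually_prob_card_Union_nbr_set_le[OF assms(2,4,5) nq[unfolded q_def], of r]
    by (simp add: q_def mult_ac)
  ultimately show ?thesis
    unfolding event hm q_def
    by (intro smallo_power_Suc_of_le[where L = "\<lambda>n. real n * rkg_edge_prob (X n) (Y n)"
          and E = "\<lambda>n. exp (- real m * real n * rkg_edge_prob (X n) (Y n))"]) simp_all
qed

end
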